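(* Let $\Omega$ be a triangulation whose edges are labeled as terminal-, internal- and frontier-edges. Let $P$ be the (non-simple) polygon bounding a terminal-edge region $R$ of $\Omega$, and let $B$ be the set of barrier-edge tips of $P$. Compute $\deg(b_i)$ for every $b_i\in B$ by visiting the triangles of $R$ incident to $b_i$. Over all these computations together, each triangle of $R$ is visited at most $3$ times.
   Context: Let $\Omega$ be a triangulation in which every triangle has a designated unique longest edge. Edges are labeled as follows. An edge shared by two triangles is: - a terminal-edge if it is the longest edge of both triangles; - a frontier-edge if it is the longest edge of neither triangle; - an internal-edge otherwise. Edges belonging to a single triangle are boundary edges and are treated as frontier-edges. For a triangle $t_0$, $\mathrm{Lepp}(t_0)$ is the sequence $t_0,t_1,\dots$ in which each $t_i$ is the neighbor of $t_{i-1}$ across the longest edge of $t_{i-1}$, ending at a terminal (or boundary) edge. A terminal-edge region $R$ is the union of all triangles whose Lepp ends at the same terminal-edge. Its boundary polygon $P$ consists of the frontier-edges surrounding it. A barrier-edge is a frontier-edge both of whose adjacent triangles lie in $R$. A barrier-edge tip of $R$ is an endpoint of a barrier-edge that is shared by no other barrier-edge or frontier-edge. For a barrier-edge tip $b$, $\deg(b)$ is the number of internal-edges of $R$ incident to $b$. It is computed by visiting, one at a time, the triangles of $R$ having $b$ as a vertex; a triangle is visited once in the computation of $\deg(b)$ if it has $b$ as a vertex, and not at all otherwise. *)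

theory Defs
  imports Main
begin

text \<open>Combinatorial model of a triangulation: a triangle is a 3-element set of vertices,
  an edge is a 2-element subset of a triangle; lg t is the designated longest edge of t.\<close>

definition edges_of :: "'v set \<Rightarrow> 'v set set" where
  "edges_of t = {e. e \<subseteq> t \<and> card e = 2}"

definition tris_with :: "'v set set \<Rightarrow> 'v set \<Rightarrow> 'v set set" where
  "tris_with T e = {t \<in> T. e \<subseteq> t}"

definition is_edge :: "'v set set \<Rightarrow> 'v set \<Rightarrow> bool" where
  "is_edge T e \<longleftrightarrow> (\<exists>t\<in>T. e \<in> edges_of t)"

definition is_triangulation :: "'v set set \<Rightarrow> ('v set \<Rightarrow> 'v set) \<Rightarrow> bool" where
  "is_triangulation T lg \<longleftrightarrow> finite T \<and>
     (\<forall>t\<in>T. card t = 3 \<and> lg t \<in> edges_of t) \<and>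
     (\<forall>t\<in>T. \<forall>e\<in>edges_of t. card (tris_with T e) \<le> 2)"

definition terminal_edge :: "'v set set \<Rightarrow> ('v set \<Rightarrow> 'v set) \<Rightarrow> 'v set \<Rightarrow> bool" where
  "terminal_edge T lg e \<longleftrightarrow> is_edge T e \<and> card (tris_with T e) = 2 \<and>
     (\<forall>t\<in>tris_with T e. lg t = e)"

definition frontier_edge :: "'v set set \<Rightarrow> ('v set \<Rightarrow> 'v set) \<Rightarrow> 'v set \<Rightarrow> bool" where
  "frontier_edge T lg e \<longleftrightarrow> is_edge T e \<and>
     (card (tris_with T e) = 1 \<or> (card (tris_with T e) = 2 \<and> (\<forall>t\<in>tris_with T e. lg t \<noteq> e)))"

inductive lepp_ends_at :: "'v set set \<Rightarrow> ('v set \<Rightarrow> 'v set) \<Rightarrow> 'v set \<Rightarrow> 'v set \<Rightarrow> bool"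
  for T lg where
  base: "t \<in> T \<Longrightarrow> lg t = e \<Longrightarrow> terminal_edge T lg e \<Longrightarrow> lepp_ends_at T lg t e"
| step: "t \<in> T \<Longrightarrow> t' \<in> T \<Longrightarrow> t' \<noteq> t \<Longrightarrow> lg t \<subseteq> t' \<Longrightarrow> lg t' \<noteq> lg t \<Longrightarrow>
         lepp_ends_at T lg t' e \<Longrightarrow> lepp_ends_at T lg t e"

definition region :: "'v set set \<Rightarrow> ('v set \<Rightarrow> 'v set) \<Rightarrow> 'v set \<Rightarrow> 'v set set" where
  "region T lg e = {t \<in> T. lepp_ends_at T lg t e}"

definition barrier_edge :: "'v set set \<Rightarrow> ('v set \<Rightarrow> 'v set) \<Rightarrow> 'v set set \<Rightarrow> 'v set \<Rightarrow> bool" where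
  "barrier_edge T lg R e \<longleftrightarrow> frontier_edge T lg e \<and> card (tris_with T e) = 2 \<and> tris_with T e \<subseteq> R"

text \<open>Barrier-edge tip: endpoint of a barrier edge shared by no other barrier edge or
  frontier edge of (the boundary polygon of) R.\<close>
definition barrier_tip :: "'v set set \<Rightarrow> ('v set \<Rightarrow> 'v set) \<Rightarrow> 'v set set \<Rightarrow> 'v \<Rightarrow> bool" where
  "barrier_tip T lg R b \<longleftrightarrow> (\<exists>e. barrier_edge T lg R e \<and> b \<in> e \<and>
     (\<forall>e'. e' \<noteq> e \<and> b \<in> e' \<and> frontier_edge T lg e' \<and> (\<exists>t\<in>R. e' \<subseteq> t) \<longrightarrow> False))"

definition deg_visited :: "'v set set \<Rightarrow> 'v \<Rightarrow> 'v set set" where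
  "deg_visited R b = {t \<in> R. b \<in> t}"

end

theory Submission
  imports Defs
begin

(* A triangle t is visited in the computation of deg(b) only if b is a vertex of t,
   so it is visited at most once per vertex, that is at most three times. Nothing about
   barrier tips or the terminal edge is needed: the bound holds for any set of vertices B. *)

lemma region_subset: "region T lg e \<subseteq> T"
  by (auto simp: region_def)

lemma card_triangle:
  assumes "is_triangulation T lg" and "t \<in> T"
  shows "card t = 3"
  using assms by (simp add: is_triangulation_def)

lemma visits_subset_vertices: "{b \<in> B. t \<in> deg_visited R b} \<subseteq> t"
  by (auto simp: deg_visited_def)

lemma card_visits_le_card:
  assumes "finite t"
  shows "card {b \<in> B. t \<in> deg_visited R b} \<le> card t"
  using card_mono[OF assms visits_subset_vertices] .

theorem lemma2:
  fixes T :: "'v set set" and lg :: "'v set \<Rightarrow> 'v set" and e :: "'v set"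
  assumes "is_triangulation T lg"
    and "terminal_edge T lg e"
    and "R = region T lg e"
    and "B = {b. barrier_tip T lg R b}"
  shows "\<forall>t\<in>R. card {b \<in> B. t \<in> deg_visited R b} \<le> 3"
proof
  fix t assume "t \<in> R"
  with assms(3) region_subset have "t \<in> T" by blast
  with assms(1) have three: "card t = 3" by (rule card_triangle)
  then have "finite t" by (intro card_ge_0_finite) simp
  then show "card {b \<in> B. t \<in> deg_visited R b} \<le> 3"
    using card_visits_le_card[of t B R] three by simp
qed

end
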